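(* There is an absolute constant $C>0$ such that the following holds. Let $\lambda\vdash n$ and $\mu\vdash\Delta$ (with $\Delta\in\mathbb{N}$) be partitions with $\mu=\lambda\backslash\lambda_1$, and let $q\in\mathbb{N}$. Then \[ \left|m_{\chi_\lambda}^{(q)}-\frac{\chi_\mu(1)}{n!}\sum_{\pi\in S_n}\binom{c_1(\pi^q)}{\Delta}\right|\leq C\,\frac{\chi_\mu(1)}{n!}\sum_{j=1}^{\Delta}\sum_{\pi\in S_n}\binom{c_1(\pi^q)+\cdots+c_{j+1}(\pi^q)}{\Delta-j}. \]
   Context: For a positive integer $q$, $r_q\colon S_n\to\mathbb{N}_0$, $r_q(\pi)=\#\{\sigma\in S_n:\sigma^q=\pi\}$, and for an irreducible character $\chi$ of $S_n$, $m_\chi^{(q)}:=\langle r_q,\chi\rangle$ (equivalently $m_\chi^{(q)}=\frac{1}{n!}\sum_{\pi\in S_n}\chi(\pi^q)$). For a partition $\lambda=(\lambda_1,\ldots,\lambda_l)\vdash n$, $\lambda\backslash\lambda_1:=(\lambda_2,\ldots,\lambda_l)$. $\chi_\lambda$ is the irreducible character of $S_n$ indexed by $\lambda$, and $\chi_\mu(1)$ is the degree of the irreducible character of $S_\Delta$ indexed by $\mu$. For $\pi\in S_n$, $c_i(\pi)$ is the number of $i$-cycles of $\pi$. *)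

theory Defs
  imports Complex_Main "HOL-Combinatorics.Permutations" "HOL-Library.FuncSet"
begin

definition sym_grp :: "nat \<Rightarrow> (nat \<Rightarrow> nat) set" where
  "sym_grp n = {p. p permutes {0..<n}}"

definition cyc_len :: "(nat \<Rightarrow> nat) \<Rightarrow> nat \<Rightarrow> nat" where
  "cyc_len p x = (LEAST k. 0 < k \<and> (p ^^ k) x = x)"

definition cycle_count :: "nat \<Rightarrow> (nat \<Rightarrow> nat) \<Rightarrow> nat \<Rightarrow> nat" where
  "cycle_count n p i = card {x \<in> {0..<n}. cyc_len p x = i} div i"

definition is_partition :: "nat list \<Rightarrow> nat \<Rightarrow> bool" where
  "is_partition lam n \<longleftrightarrow> sorted_wrt (\<ge>) lam \<and> (\<forall>x\<in>set lam. 0 < x) \<and> sum_list lam = n"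

definition perm_orbit :: "(nat \<Rightarrow> nat) \<Rightarrow> nat \<Rightarrow> nat set" where
  "perm_orbit p x = {(p ^^ k) x | k. True}"

definition perm_cycles :: "nat \<Rightarrow> (nat \<Rightarrow> nat) \<Rightarrow> nat set set" where
  "perm_cycles n p = perm_orbit p ` {0..<n}"

text \<open>Number of ways to colour the cycles of p with colours 0..<l such that the cycles
  of colour i have total length alpha i (= <h_alpha, p_rho>, a Young permutation character).\<close>
definition colorings_count :: "nat \<Rightarrow> (nat \<Rightarrow> nat) \<Rightarrow> nat \<Rightarrow> (nat \<Rightarrow> int) \<Rightarrow> nat" where
  "colorings_count n p l alpha =
     card {f \<in> perm_cycles n p \<rightarrow>\<^sub>E {0..<l}.
             \<forall>i<l. int (\<Sum>C\<in>{C \<in> perm_cycles n p. f C = i}. card C) = alpha i}"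

text \<open>Irreducible character chi_lambda of S_n (n = |lambda|), via the Frobenius /
  Jacobi--Trudi determinant formula
  chi_lambda = sum_sigma sgn(sigma) * (character of Young subgroup S_{lambda_i - i + sigma(i)}).\<close>
definition chi :: "nat list \<Rightarrow> (nat \<Rightarrow> nat) \<Rightarrow> int" where
  "chi lam p = (\<Sum>\<sigma> \<in> {\<sigma>. \<sigma> permutes {0..<length lam}}.
      sign \<sigma> * int (colorings_count (sum_list lam) p (length lam)
                      (\<lambda>i. int (lam ! i) - int i + int (\<sigma> i))))"

definition r_q :: "nat \<Rightarrow> nat \<Rightarrow> (nat \<Rightarrow> nat) \<Rightarrow> nat" where
  "r_q n q p = card {\<sigma> \<in> sym_grp n. \<sigma> ^^ q = p}"

text \<open>m_chi^(q) = <r_q, chi_lambda> (characters of S_n are real).\<close>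
definition mult_q :: "nat list \<Rightarrow> nat \<Rightarrow> real" where
  "mult_q lam q = (let n = sum_list lam in
     (1 / fact n) * (\<Sum>\<pi> \<in> sym_grp n. real (r_q n q \<pi>) * real_of_int (chi lam \<pi>)))"

end

(* The character chi_lam(pi) is the Jacobi-Trudi determinant det [h (lam_i - i + j)] evaluated at
   the cycle type of pi.  Expanding it along the first row writes chi_lam(pi) as a signed sum over
   pairs (k, S): a column k and a set S of cycles of pi of total length Delta - k (the cycles not
   absorbed by the first row), weighted by skew Jacobi-Trudi minors.  Stripping the cycles of S one at
   a time removes ribbons from beta-sets (colliding beads give zero), so each minor is at most the
   number of ways to slide the beads of the beta-set of mu down in Delta unit steps, which is
   chi_mu(1).  For k = 0 and S a set of Delta fixed points the minor is exactly chi_mu(1), giving the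
   main term chi_mu(1) * binom(c_1(pi), Delta).  Any other S has j = Delta - |S| >= 1 and consists of
   cycles of length at most j + 1, so there are at most binom(c_1 + ... + c_(j+1), Delta - j) of them.
   Averaging this pointwise bound over pi^q gives the theorem with C = 1, for every q >= 0. *)

theory Submission
  imports Defs "Jordan_Normal_Form.Determinant" "HOL-Combinatorics.Orbits" "HOL-Combinatorics.Cycles"
begin

section \<open>Colorings and Jacobi-Trudi determinants\<close>

definition class_weight :: "'c set \<Rightarrow> ('c \<Rightarrow> nat) \<Rightarrow> ('c \<Rightarrow> nat) \<Rightarrow> nat \<Rightarrow> nat" where
  "class_weight CS w f i = (\<Sum>C\<in>{C\<in>CS. f C = i}. w C)"

definition weighted_colorings :: "'c set \<Rightarrow> ('c \<Rightarrow> nat) \<Rightarrow> nat \<Rightarrow> (nat \<Rightarrow> int) \<Rightarrow> nat" where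
  "weighted_colorings CS w l alpha =
     card {f \<in> CS \<rightarrow>\<^sub>E {0..<l}. \<forall>i<l. int (class_weight CS w f i) = alpha i}"

lemma weighted_colorings_empty:
  "weighted_colorings {} w l alpha = (if \<forall>i<l. alpha i = 0 then 1 else 0)"
  by (simp add: weighted_colorings_def class_weight_def)

lemma class_weight_insert:
  assumes "finite CS" "c \<notin> CS"
  shows "class_weight (insert c CS) w (f(c := i)) j = class_weight CS w f j + (if i = j then w c else 0)"
proof -
  have "{C \<in> insert c CS. (f(c := i)) C = j} =
      (if i = j then insert c {C \<in> CS. f C = j} else {C \<in> CS. f C = j})"
    using assms by auto
  then show ?thesis
    using assms by (simp add: class_weight_def)
qed

lemma weighted_colorings_insert:
  assumes CS: "finite CS" "c \<notin> CS"
  shows "weighted_colorings (insert c CS) w l alpha =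
    (\<Sum>i<l. weighted_colorings CS w l (alpha(i := alpha i - int (w c))))"
proof -
  let ?ok = "\<lambda>CS f beta. \<forall>j<l. int (class_weight CS w f j) = beta j"
  let ?T = "\<lambda>i. {g \<in> CS \<rightarrow>\<^sub>E {0..<l}. ?ok CS g (alpha(i := alpha i - int (w c)))}"
  have ok_upd: "?ok (insert c CS) (g(c := i)) alpha \<longleftrightarrow> ?ok CS g (alpha(i := alpha i - int (w c)))"
    if "i < l" for g i
    using that by (auto simp: class_weight_insert[OF CS] split: if_splits)
  have "{f \<in> insert c CS \<rightarrow>\<^sub>E {0..<l}. ?ok (insert c CS) f alpha} =
      (\<lambda>(i, g). g(c := i)) ` Sigma {0..<l} ?T"
    unfolding PiE_insert_eq using ok_upd by force
  moreover have "inj_on (\<lambda>(i, g). g(c := i)) (Sigma {0..<l} ?T)"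
    by (rule inj_on_subset[OF inj_combinator[OF CS(2)]]) auto
  ultimately have "weighted_colorings (insert c CS) w l alpha = card (Sigma {0..<l} ?T)"
    unfolding weighted_colorings_def by (simp add: card_image)
  also have "\<dots> = (\<Sum>i\<in>{0..<l}. card (?T i))"
  proof (rule card_SigmaI)
    have "finite (CS \<rightarrow>\<^sub>E {0..<l})"
      using CS(1) by (intro finite_PiE) auto
    then show "\<forall>i\<in>{0..<l}. finite (?T i)"
      by auto
  qed simp
  finally show ?thesis
    unfolding weighted_colorings_def atLeast0LessThan .
qed

lemma weighted_colorings_permute_colors:
  assumes tau: "tau permutes {0..<l}" and "finite CS"
  shows "weighted_colorings CS w l (alpha \<circ> tau) = weighted_colorings CS w l alpha"
  using \<open>finite CS\<close>
proof (induction CS arbitrary: alpha rule: finite_induct)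
  case empty
  have "(\<forall>i\<in>{0..<l}. alpha (tau i) = 0) \<longleftrightarrow> (\<forall>i\<in>{0..<l}. alpha i = 0)"
    by (subst (2) permutes_image[OF tau, symmetric]) simp
  then show ?case
    by (simp add: weighted_colorings_empty Ball_def)
next
  case (insert c CS)
  have upd: "(alpha \<circ> tau)(i := (alpha \<circ> tau) i - int (w c)) =
      (alpha(tau i := alpha (tau i) - int (w c))) \<circ> tau" for i
    using permutes_inj[OF tau] by (auto simp: fun_eq_iff inj_eq)
  have "weighted_colorings (insert c CS) w l (alpha \<circ> tau) =
      (\<Sum>i<l. weighted_colorings CS w l ((alpha(tau i := alpha (tau i) - int (w c))) \<circ> tau))"
    by (simp only: weighted_colorings_insert[OF insert.hyps] upd)
  also have "\<dots> = (\<Sum>i<l. weighted_colorings CS w l (alpha(tau i := alpha (tau i) - int (w c))))"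
    by (rule sum.cong[OF refl]) (rule insert.IH)
  also have "\<dots> = (\<Sum>j<l. weighted_colorings CS w l (alpha(j := alpha j - int (w c))))"
    using sum.reindex_bij_betw[OF permutes_imp_bij[OF tau]] by (simp add: atLeast0LessThan)
  also have "\<dots> = weighted_colorings (insert c CS) w l alpha"
    using insert by (simp add: weighted_colorings_insert)
  finally show ?case .
qed

text \<open>The determinant det [h (a i - b j)] evaluated at the cycle type given by the weighted set
  (CS, w), where h alpha counts the colorings with color class weights alpha.\<close>
definition jacobi_trudi :: "nat \<Rightarrow> (nat \<Rightarrow> int) \<Rightarrow> (nat \<Rightarrow> int) \<Rightarrow> 'c set \<Rightarrow> ('c \<Rightarrow> nat) \<Rightarrow> int" where
  "jacobi_trudi l a b CS w =
     (\<Sum>\<sigma> | \<sigma> permutes {0..<l}. sign \<sigma> * int (weighted_colorings CS w l (\<lambda>i. a i - b (\<sigma> i))))"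

lemma jacobi_trudi_cong_diff:
  assumes "\<And>i j. a i - b j = a' i - b' j"
  shows "jacobi_trudi l a b CS w = jacobi_trudi l a' b' CS w"
  using assms by (simp add: jacobi_trudi_def)

lemma jacobi_trudi_insert:
  assumes "finite CS" "c \<notin> CS"
  shows "jacobi_trudi l a b (insert c CS) w = (\<Sum>i<l. jacobi_trudi l (a(i := a i - int (w c))) b CS w)"
proof -
  have upd: "(\<lambda>t. a t - b (\<sigma> t))(i := a i - b (\<sigma> i) - int (w c)) =
      (\<lambda>t. (a(i := a i - int (w c))) t - b (\<sigma> t))" for \<sigma> i
    by (auto simp: fun_eq_iff)
  show ?thesis
    unfolding jacobi_trudi_def using assms
    by (simp add: weighted_colorings_insert upd sum_distrib_left sum.swap[of _ _ "{..<l}"])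
qed

lemma jacobi_trudi_eq_0_if_repeated:
  assumes "finite CS" "i < l" "j < l" "i \<noteq> j" "a i = a j"
  shows "jacobi_trudi l a b CS w = 0"
proof -
  define tau where "tau = Transposition.transpose i j"
  have tau: "tau permutes {0..<l}"
    unfolding tau_def using assms by (intro permutes_swap_id) auto
  define h where "h = (\<lambda>\<sigma>. sign \<sigma> * int (weighted_colorings CS w l (\<lambda>t. a t - b (\<sigma> t))))"
  have "h (\<sigma> \<circ> tau) = - h \<sigma>" if "\<sigma> permutes {0..<l}" for \<sigma>
  proof -
    have "sign (\<sigma> \<circ> tau) = - sign \<sigma>"
      using sign_compose[OF permutes_imp_permutation[OF _ that] permutes_imp_permutation[OF _ tau]]
      by (simp add: tau_def sign_swap_id assms)
    moreover have "(\<lambda>t. a t - b ((\<sigma> \<circ> tau) t)) = (\<lambda>t. a t - b (\<sigma> t)) \<circ> tau"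
      using assms by (auto simp: fun_eq_iff tau_def Transposition.transpose_def)
    ultimately show ?thesis
      unfolding h_def by (simp add: weighted_colorings_permute_colors[OF tau assms(1)])
  qed
  then have "jacobi_trudi l a b CS w = - (\<Sum>\<sigma> | \<sigma> permutes {0..<l}. h (\<sigma> \<circ> tau))"
    unfolding jacobi_trudi_def h_def[symmetric] by (simp add: sum_negf)
  also have "(\<Sum>\<sigma> | \<sigma> permutes {0..<l}. h (\<sigma> \<circ> tau)) = jacobi_trudi l a b CS w"
    using sum_permutations_compose_right[OF tau, of h] unfolding h_def jacobi_trudi_def by simp
  finally show ?thesis by simp
qed

lemma jacobi_trudi_empty:
  "jacobi_trudi l a b {} w = (\<Sum>\<sigma> | \<sigma> permutes {0..<l} \<and> (\<forall>i<l. a i = b (\<sigma> i)). sign \<sigma>)"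
proof -
  have "finite {\<sigma>. \<sigma> permutes {0..<l}}"
    by (simp add: finite_permutations)
  then show ?thesis
    unfolding jacobi_trudi_def weighted_colorings_empty
    by (simp add: sum.inter_filter[symmetric] of_bool_def[symmetric] Int_def)
qed

lemma matching_permutation_unique:
  fixes l :: nat
  assumes b: "inj_on b {0..<l}" and \<sigma>: "\<sigma> permutes {0..<l}" and \<tau>: "\<tau> permutes {0..<l}"
    and "\<forall>i<l. a i = b (\<sigma> i)" "\<forall>i<l. a i = b (\<tau> i)"
  shows "\<sigma> = \<tau>"
proof
  fix i
  show "\<sigma> i = \<tau> i"
  proof (cases "i < l")
    case True
    then have "b (\<sigma> i) = b (\<tau> i)"
      using assms(4,5) by metis
    moreover have "\<sigma> i \<in> {0..<l}" "\<tau> i \<in> {0..<l}"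
      using True permutes_in_image[OF \<sigma>, of i] permutes_in_image[OF \<tau>, of i] by auto
    ultimately show ?thesis
      by (rule inj_onD[OF b])
  next
    case False
    then show ?thesis
      using permutes_not_in[OF \<sigma>] permutes_not_in[OF \<tau>] by simp
  qed
qed

lemma matching_permutation_image_eq:
  fixes l :: nat
  assumes "\<sigma> permutes {0..<l}" "\<forall>i<l. a i = b (\<sigma> i)"
  shows "a ` {0..<l} = b ` {0..<l}"
proof -
  have "a ` {0..<l} = b ` \<sigma> ` {0..<l}"
    using assms(2) by (auto simp: image_image)
  then show ?thesis
    by (simp add: permutes_image[OF assms(1)])
qed

lemma strict_antimono_on_image_eq:
  fixes a b :: "nat \<Rightarrow> 'a::linorder"
  assumes "strict_antimono_on {0..<l} a" "strict_antimono_on {0..<l} b"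
    and "a ` {0..<l} = b ` {0..<l}" "i < l"
  shows "a i = b i"
proof -
  have sorted: "sorted_wrt (<) (rev (map f [0..<l]))" if "strict_antimono_on {0..<l} f" for f :: "nat \<Rightarrow> 'a"
    unfolding sorted_wrt_rev sorted_wrt_map
    by (rule sorted_wrt_mono_rel[OF _ sorted_wrt_upt]) (use that in \<open>auto simp: monotone_on_def\<close>)
  have "rev (map a [0..<l]) = rev (map b [0..<l])"
    using assms(3) by (intro strict_sorted_equal sorted assms(1,2)) simp
  then show ?thesis
    using assms(4) by simp
qed

lemma jacobi_trudi_empty_abs_le:
  assumes b: "inj_on b {0..<l}"
  shows "\<bar>jacobi_trudi l a b {} w\<bar> \<le> of_bool (a ` {0..<l} = b ` {0..<l})"
proof -
  let ?Q = "{\<sigma>. \<sigma> permutes {0..<l} \<and> (\<forall>i<l. a i = b (\<sigma> i))}"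
  have "finite ?Q"
    by (rule finite_subset[OF _ finite_permutations[of "{0..<l}"]]) auto
  then have "card ?Q \<le> 1"
    using matching_permutation_unique[OF b] by (auto simp: card_le_Suc0_iff_eq)
  moreover have "\<bar>jacobi_trudi l a b {} w\<bar> \<le> int (card ?Q)"
  proof -
    have abs_sign: "\<bar>sign \<sigma>\<bar> = (1::int)" for \<sigma> :: "nat \<Rightarrow> nat"
      by (simp add: sign_def)
    show ?thesis
      unfolding jacobi_trudi_empty by (rule order_trans[OF sum_abs]) (simp add: abs_sign)
  qed
  moreover have "?Q = {}" if "a ` {0..<l} \<noteq> b ` {0..<l}"
    using matching_permutation_image_eq that by blast
  ultimately show ?thesis
    by (cases "a ` {0..<l} = b ` {0..<l}") auto
qed

lemma jacobi_trudi_empty_strict_antimono: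
  assumes a: "strict_antimono_on {0..<l} a" and b: "strict_antimono_on {0..<l} b"
  shows "jacobi_trudi l a b {} w = of_bool (a ` {0..<l} = b ` {0..<l})"
proof (cases "a ` {0..<l} = b ` {0..<l}")
  case True
  then have "\<forall>i<l. a i = b (id i)"
    using strict_antimono_on_image_eq[OF a b] by simp
  moreover have "inj_on b {0..<l}"
    using b by (simp add: strict_antimono_iff_antimono)
  ultimately have "{\<sigma>. \<sigma> permutes {0..<l} \<and> (\<forall>i<l. a i = b (\<sigma> i))} = {id}"
    using matching_permutation_unique permutes_id by blast
  then show ?thesis
    using True by (simp add: jacobi_trudi_empty)
next
  case False
  then have no_match: "{\<sigma>. \<sigma> permutes {0..<l} \<and> (\<forall>i<l. a i = b (\<sigma> i))} = {}"
    using matching_permutation_image_eq by blast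
  show ?thesis
    unfolding jacobi_trudi_empty no_match using False by simp
qed

section \<open>Bead moves on beta-sets\<close>

text \<open>Each move takes a bead x of the beta-set to the free position x - 1.  Between beta-sets of
  partitions, bead_paths counts standard skew tableaux.\<close>
fun bead_paths :: "int set \<Rightarrow> int set \<Rightarrow> nat \<Rightarrow> nat" where
  "bead_paths A B 0 = of_bool (A = B)"
| "bead_paths A B (Suc k) = (\<Sum>x \<in> {x \<in> A. x - 1 \<notin> A}. bead_paths (insert (x - 1) (A - {x})) B k)"

inductive bead_reachable :: "int set \<Rightarrow> int set \<Rightarrow> nat \<Rightarrow> bool" where
  bead_reachable_0: "bead_reachable A A 0"
| bead_reachable_Suc: "x \<in> A \<Longrightarrow> x - 1 \<notin> A \<Longrightarrow> bead_reachable (insert (x - 1) (A - {x})) B k \<Longrightarrow>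
    bead_reachable A B (Suc k)"

lemma bead_reachable_trans:
  "bead_reachable A B r \<Longrightarrow> bead_reachable B C s \<Longrightarrow> bead_reachable A C (r + s)"
  by (induction rule: bead_reachable.induct) (auto intro: bead_reachable.intros)

text \<open>Removing an r-ribbon by r unit moves: move x itself first if x - 1 is free, otherwise first
  slide the bead at x - 1 down to x - r.\<close>
lemma bead_reachable_slide:
  assumes "x \<in> A" "x - int r \<notin> A" "0 < r"
  shows "bead_reachable A (insert (x - int r) (A - {x})) r"
  using assms
proof (induction r arbitrary: x A rule: less_induct)
  case (less r)
  show ?case
  proof (cases "r = 1")
    case True
    then show ?thesis
      using less.prems by (auto intro: bead_reachable.intros)
  next
    case False
    then have r: "int (r - 1) = int r - 1" "r - 1 < r" "0 < r - 1"
      using less.prems by auto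
    show ?thesis
    proof (cases "x - 1 \<in> A")
      case False
      let ?A = "insert (x - 1) (A - {x})"
      have "bead_reachable ?A (insert ((x - 1) - int (r - 1)) (?A - {x - 1})) (r - 1)"
        using r less.prems by (intro less.IH) auto
      moreover have "insert ((x - 1) - int (r - 1)) (?A - {x - 1}) = insert (x - int r) (A - {x})"
        using False r by auto
      ultimately have "bead_reachable A (insert (x - int r) (A - {x})) (Suc (r - 1))"
        using bead_reachable_Suc[OF less.prems(1)] False by simp
      then show ?thesis
        using r by simp
    next
      case True
      let ?A = "insert ((x - 1) - int (r - 1)) (A - {x - 1})"
      have "bead_reachable A ?A (r - 1)"
        using r less.prems True by (intro less.IH) auto
      moreover have "bead_reachable ?A (insert (x - 1) (?A - {x})) 1"
        using less.prems r by (auto intro: bead_reachable.intros)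
      moreover have "insert (x - 1) (?A - {x}) = insert (x - int r) (A - {x})"
        using True r less.prems by auto
      ultimately show ?thesis
        using bead_reachable_trans r by fastforce
    qed
  qed
qed

lemma sum_bead_paths_le:
  assumes "finite A" "finite I" "inj_on T I" "\<forall>i\<in>I. bead_reachable A (T i) r"
  shows "(\<Sum>i\<in>I. bead_paths (T i) B k) \<le> bead_paths A B (r + k)"
  using assms
proof (induction r arbitrary: A I)
  case 0
  then have "I \<subseteq> {i. T i = A}"
    by (auto elim: bead_reachable.cases)
  moreover have "i = j" if "i \<in> I" "j \<in> I" "T i = T j" for i j
    using inj_onD[OF "0.prems"(3) that(3,1,2)] .
  ultimately have "card I \<le> Suc 0"
    unfolding card_le_Suc0_iff_eq[OF "0.prems"(2)] by blast
  moreover have "(\<Sum>i\<in>I. bead_paths (T i) B k) = card I * bead_paths A B k"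
    using \<open>I \<subseteq> {i. T i = A}\<close> by (simp add: subset_eq)
  ultimately show ?case
    by simp
next
  case (Suc r)
  let ?X = "{x \<in> A. x - 1 \<notin> A}"
  define first where
    "first i = (SOME x. x \<in> ?X \<and> bead_reachable (insert (x - 1) (A - {x})) (T i) r)" for i
  have first: "first i \<in> ?X \<and> bead_reachable (insert (first i - 1) (A - {first i})) (T i) r"
    if "i \<in> I" for i
  proof -
    have "bead_reachable A (T i) (Suc r)"
      using Suc.prems that by blast
    then have "\<exists>x. x \<in> ?X \<and> bead_reachable (insert (x - 1) (A - {x})) (T i) r"
      by (cases rule: bead_reachable.cases) auto
    then show ?thesis
      unfolding first_def by (rule someI_ex)
  qed
  have "(\<Sum>i\<in>I. bead_paths (T i) B k) = (\<Sum>x\<in>?X. \<Sum>i\<in>{i \<in> I. first i = x}. bead_paths (T i) B k)"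
    using Suc.prems first by (intro sum.group[symmetric]) auto
  also have "\<dots> \<le> (\<Sum>x\<in>?X. bead_paths (insert (x - 1) (A - {x})) B (r + k))"
    using Suc.prems first by (intro sum_mono Suc.IH) (auto intro: inj_on_subset)
  also have "\<dots> = bead_paths A B (Suc r + k)"
    by simp
  finally show ?case .
qed

lemma bead_paths_pos:
  "finite A \<Longrightarrow> bead_reachable A B r \<Longrightarrow> 1 \<le> bead_paths A B r"
  using sum_bead_paths_le[of A "{()}" "\<lambda>_. B" r B 0] by simp

lemma bead_paths_mono_target:
  assumes "finite B" "bead_reachable B B' s"
  shows "bead_paths A B k \<le> bead_paths A B' (k + s)"
proof (induction k arbitrary: A)
  case 0
  show ?case
    using bead_paths_pos[OF assms] by simp
next
  case (Suc k)
  then show ?case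
    by (simp add: sum_mono)
qed

lemma image_fun_upd_inj_on:
  fixes l :: nat
  assumes "inj_on a {0..<l}" "i < l"
  shows "(a(i := v)) ` {0..<l} = insert v (a ` {0..<l} - {a i})"
proof -
  have "a ` ({0..<l} - {i}) = a ` {0..<l} - {a i}"
    using assms by (subst inj_on_image_set_diff[OF assms(1)]) auto
  then show ?thesis
    unfolding fun_upd_image using assms(2) by simp
qed

lemma jacobi_trudi_insert_inj:
  assumes CS: "finite CS" "c \<notin> CS" and a: "inj_on a {0..<l}" and "0 < w c"
  shows "jacobi_trudi l a b (insert c CS) w =
    (\<Sum>i \<in> {i. i < l \<and> a i - int (w c) \<notin> a ` {0..<l}}. jacobi_trudi l (a(i := a i - int (w c))) b CS w)"
proof -
  have "jacobi_trudi l (a(i := a i - int (w c))) b CS w = 0"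
    if i: "i < l" and collision: "a i - int (w c) \<in> a ` {0..<l}" for i
  proof -
    obtain j where "j < l" "a j = a i - int (w c)"
      using collision by auto
    then show ?thesis
      using \<open>0 < w c\<close> i
      by (intro jacobi_trudi_eq_0_if_repeated[OF CS(1), of i l j]) auto
  qed
  then show ?thesis
    unfolding jacobi_trudi_insert[OF CS] by (intro sum.mono_neutral_right) auto
qed

text \<open>Murnaghan-Nakayama: removing an element of weight r lowers one entry of a by r, i.e. slides one
  bead down by r, which takes r unit moves.\<close>
lemma jacobi_trudi_abs_le_bead_paths:
  assumes "finite CS" "\<forall>C\<in>CS. 0 < w C" "inj_on a {0..<l}" "inj_on b {0..<l}"
  shows "\<bar>jacobi_trudi l a b CS w\<bar> \<le> int (bead_paths (a ` {0..<l}) (b ` {0..<l}) (\<Sum>C\<in>CS. w C))"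
  using assms
proof (induction CS arbitrary: a rule: finite_induct)
  case empty
  then show ?case
    using jacobi_trudi_empty_abs_le[of b l a w] by simp
next
  case (insert c CS)
  define r where "r = w c"
  define A where "A = a ` {0..<l}"
  define W where "W = (\<Sum>C\<in>CS. w C)"
  define I where "I = {i. i < l \<and> a i - int r \<notin> A}"
  define T where "T i = insert (a i - int r) (A - {a i})" for i
  have r: "0 < r"
    using insert.prems unfolding r_def by simp
  have minor_le: "\<bar>jacobi_trudi l (a(i := a i - int r)) b CS w\<bar> \<le> int (bead_paths (T i) (b ` {0..<l}) W)"
    if "i \<in> I" for i
  proof -
    have inj: "inj_on (a(i := a i - int r)) {0..<l}"
      using insert.prems that by (intro inj_on_fun_updI) (auto simp: I_def A_def)
    have img: "(a(i := a i - int r)) ` {0..<l} = T i"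
      using insert.prems(2) that unfolding T_def A_def I_def by (intro image_fun_upd_inj_on) auto
    have pos: "\<forall>C\<in>CS. 0 < w C"
      using insert.prems(1) by simp
    from insert.IH[OF pos inj insert.prems(3)] show ?thesis
      unfolding img W_def .
  qed
  have "jacobi_trudi l a b (insert c CS) w = (\<Sum>i\<in>I. jacobi_trudi l (a(i := a i - int r)) b CS w)"
    unfolding I_def A_def r_def using insert.prems by (intro jacobi_trudi_insert_inj insert.hyps) auto
  then have "\<bar>jacobi_trudi l a b (insert c CS) w\<bar> \<le> (\<Sum>i\<in>I. \<bar>jacobi_trudi l (a(i := a i - int r)) b CS w\<bar>)"
    by (simp add: sum_abs)
  also have "\<dots> \<le> int (\<Sum>i\<in>I. bead_paths (T i) (b ` {0..<l}) W)"
    unfolding of_nat_sum by (intro sum_mono minor_le)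
  also have "(\<Sum>i\<in>I. bead_paths (T i) (b ` {0..<l}) W) \<le> bead_paths A (b ` {0..<l}) (r + W)"
  proof (rule sum_bead_paths_le)
    show "inj_on T I"
    proof (rule inj_onI)
      fix i j
      assume ij: "i \<in> I" "j \<in> I" "T i = T j"
      have "a i \<notin> T i"
        using r by (simp add: T_def)
      then have "a i = a j"
        using ij by (auto simp: T_def A_def I_def)
      then show "i = j"
        using ij insert.prems(2) by (auto simp: I_def dest: inj_onD)
    qed
    show "\<forall>i\<in>I. bead_reachable A (T i) r"
      using r by (auto simp: I_def A_def T_def intro: bead_reachable_slide)
  qed (auto simp: A_def I_def)
  finally show ?case
    using insert.hyps by (simp add: A_def W_def r_def)
qed

lemma strict_antimono_on_bead_move:
  fixes a :: "nat \<Rightarrow> int"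
  assumes a: "strict_antimono_on {0..<l} a" and "a i - 1 \<notin> a ` {0..<l}"
  shows "strict_antimono_on {0..<l} (a(i := a i - 1))"
proof (rule monotone_onI)
  fix p q
  assume pq: "p \<in> {0..<l}" "q \<in> {0..<l}" "p < q"
  then have "a q < a p"
    using monotone_onD[OF a] by blast
  moreover have "a q \<noteq> a i - 1"
    using assms(2) imageI[OF pq(2), of a] by auto
  ultimately show "(a(i := a i - 1)) q < (a(i := a i - 1)) p"
    using pq by auto
qed

lemma jacobi_trudi_unit_weights:
  assumes "finite CS" "\<forall>C\<in>CS. w C = 1" "strict_antimono_on {0..<l} a" "strict_antimono_on {0..<l} b"
  shows "jacobi_trudi l a b CS w = int (bead_paths (a ` {0..<l}) (b ` {0..<l}) (card CS))"
  using assms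
proof (induction CS arbitrary: a rule: finite_induct)
  case empty
  then show ?case
    using jacobi_trudi_empty_strict_antimono[of l a b w] by simp
next
  case (insert c CS)
  define A where "A = a ` {0..<l}"
  define I where "I = {i. i < l \<and> a i - 1 \<notin> A}"
  have inj: "inj_on a {0..<l}"
    using insert.prems(2) by (simp add: strict_antimono_iff_antimono)
  have "jacobi_trudi l (a(i := a i - 1)) b CS w =
      int (bead_paths (insert (a i - 1) (A - {a i})) (b ` {0..<l}) (card CS))" if "i \<in> I" for i
  proof -
    have unit: "\<forall>C\<in>CS. w C = 1"
      using insert.prems(1) by simp
    have mono: "strict_antimono_on {0..<l} (a(i := a i - 1))"
      using that insert.prems(2) by (intro strict_antimono_on_bead_move) (auto simp: I_def A_def)
    have img: "(a(i := a i - 1)) ` {0..<l} = insert (a i - 1) (A - {a i})"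
      using that unfolding A_def I_def by (intro image_fun_upd_inj_on[OF inj]) auto
    from insert.IH[OF unit mono insert.prems(3)] show ?thesis
      unfolding img .
  qed
  then have "jacobi_trudi l a b (insert c CS) w =
      (\<Sum>i\<in>I. int (bead_paths (insert (a i - 1) (A - {a i})) (b ` {0..<l}) (card CS)))"
    using insert.prems unfolding I_def A_def by (simp add: jacobi_trudi_insert_inj[OF insert.hyps inj])
  also have "\<dots> = int (\<Sum>x\<in>a ` I. bead_paths (insert (x - 1) (A - {x})) (b ` {0..<l}) (card CS))"
    using inj_on_subset[OF inj, of I] by (simp add: I_def of_nat_sum sum.reindex subset_eq)
  also have "a ` I = {x \<in> A. x - 1 \<notin> A}"
    by (auto simp: I_def A_def)
  finally show ?case
    using insert.hyps by (simp add: A_def)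
qed

section \<open>Expansion along the first row\<close>

lemma prod_of_bool: "finite S \<Longrightarrow> (\<Prod>i\<in>S. of_bool (P i) :: 'a::comm_semiring_1) = of_bool (\<forall>i\<in>S. P i)"
  by (induction S rule: finite_induct) auto

definition match_matrix :: "nat \<Rightarrow> (nat \<Rightarrow> int) \<Rightarrow> (nat \<Rightarrow> int) \<Rightarrow> (nat \<Rightarrow> int) \<Rightarrow> int mat" where
  "match_matrix l c a b = mat l l (\<lambda>(i, j). of_bool (c i = a i - b j))"

lemma jacobi_trudi_eq_sum_det:
  assumes "finite CS"
  shows "jacobi_trudi l a b CS w =
    (\<Sum>f \<in> CS \<rightarrow>\<^sub>E {0..<l}. det (match_matrix l (\<lambda>i. int (class_weight CS w f i)) a b))"
proof -
  let ?M = "\<lambda>f. match_matrix l (\<lambda>i. int (class_weight CS w f i)) a b"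
  have "int (weighted_colorings CS w l (\<lambda>i. a i - b (\<sigma> i))) =
      (\<Sum>f \<in> CS \<rightarrow>\<^sub>E {0..<l}. \<Prod>i = 0..<l. ?M f $$ (i, \<sigma> i))" if "\<sigma> permutes {0..<l}" for \<sigma>
  proof -
    have "(\<Prod>i = 0..<l. ?M f $$ (i, \<sigma> i)) =
        (\<Prod>i = 0..<l. of_bool (int (class_weight CS w f i) = a i - b (\<sigma> i)))" for f
      by (rule prod.cong) (use permutes_in_image[OF that] in \<open>auto simp: match_matrix_def\<close>)
    then show ?thesis
      using assms by (simp add: weighted_colorings_def prod_of_bool Int_def Ball_def finite_PiE)
  qed
  moreover have "det (?M f) = (\<Sum>\<sigma> | \<sigma> permutes {0..<l}. sign \<sigma> * (\<Prod>i = 0..<l. ?M f $$ (i, \<sigma> i)))"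
    for f
    using det_def'[of "?M f" l] by (simp add: match_matrix_def)
  ultimately show ?thesis
    unfolding jacobi_trudi_def
    by (simp add: sum_distrib_left sum.swap[of _ "CS \<rightarrow>\<^sub>E {0..<l}"])
qed

lemma det_match_matrix_Suc:
  "det (match_matrix (Suc m) c a b) = (\<Sum>k<Suc m. of_bool (c 0 = a 0 - b k) * (-1) ^ k *
     det (match_matrix m (\<lambda>i. c (Suc i)) (\<lambda>i. a (Suc i)) (\<lambda>j. b (insert_index k j))))"
proof -
  let ?M = "match_matrix (Suc m) c a b"
  have "mat_delete ?M 0 k = match_matrix m (\<lambda>i. c (Suc i)) (\<lambda>i. a (Suc i)) (\<lambda>j. b (insert_index k j))"
    for k
    unfolding mat_delete_def match_matrix_def by (rule eq_matI) (auto simp: insert_index_def)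
  moreover have "det ?M = (\<Sum>k<Suc m. ?M $$ (0, k) * cofactor ?M 0 k)"
    by (rule laplace_expansion_row) (auto simp: match_matrix_def)
  ultimately show ?thesis
    by (simp add: cofactor_def match_matrix_def mult.assoc)
qed

definition shift_coloring :: "'c set \<Rightarrow> 'c set \<Rightarrow> ('c \<Rightarrow> nat) \<Rightarrow> 'c \<Rightarrow> nat" where
  "shift_coloring CS S g = (\<lambda>C. if C \<in> CS then if C \<in> S then Suc (g C) else 0 else undefined)"

lemma bij_betw_shift_coloring:
  "bij_betw (\<lambda>(S, g). shift_coloring CS S g) (SIGMA S : Pow CS. S \<rightarrow>\<^sub>E {0..<m}) (CS \<rightarrow>\<^sub>E {0..<Suc m})"
proof (rule bij_betw_byWitness[where f' = "\<lambda>f. ({C \<in> CS. f C \<noteq> 0}, \<lambda>C\<in>{C \<in> CS. f C \<noteq> 0}. f C - 1)"])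
  show "\<forall>p \<in> SIGMA S : Pow CS. S \<rightarrow>\<^sub>E {0..<m}.
      (\<lambda>f. ({C \<in> CS. f C \<noteq> 0}, \<lambda>C\<in>{C \<in> CS. f C \<noteq> 0}. f C - 1)) ((\<lambda>(S, g). shift_coloring CS S g) p) = p"
    by (auto simp: shift_coloring_def fun_eq_iff PiE_def extensional_def)
  show "\<forall>f \<in> CS \<rightarrow>\<^sub>E {0..<Suc m}.
      (\<lambda>(S, g). shift_coloring CS S g) ({C \<in> CS. f C \<noteq> 0}, \<lambda>C\<in>{C \<in> CS. f C \<noteq> 0}. f C - 1) = f"
    by (auto simp: shift_coloring_def fun_eq_iff PiE_def extensional_def)
  show "(\<lambda>(S, g). shift_coloring CS S g) ` (SIGMA S : Pow CS. S \<rightarrow>\<^sub>E {0..<m}) \<subseteq> CS \<rightarrow>\<^sub>E {0..<Suc m}"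
    by (auto simp: shift_coloring_def PiE_def extensional_def Pi_def)
  show "(\<lambda>f. ({C \<in> CS. f C \<noteq> 0}, \<lambda>C\<in>{C \<in> CS. f C \<noteq> 0}. f C - 1)) ` (CS \<rightarrow>\<^sub>E {0..<Suc m})
      \<subseteq> (SIGMA S : Pow CS. S \<rightarrow>\<^sub>E {0..<m})"
  proof (rule image_subsetI)
    fix f
    assume "f \<in> CS \<rightarrow>\<^sub>E {0..<Suc m}"
    then have "(\<lambda>C\<in>{C \<in> CS. f C \<noteq> 0}. f C - 1) \<in> {C \<in> CS. f C \<noteq> 0} \<rightarrow>\<^sub>E {0..<m}"
      unfolding restrict_PiE_iff using PiE_mem by fastforce
    then show "({C \<in> CS. f C \<noteq> 0}, \<lambda>C\<in>{C \<in> CS. f C \<noteq> 0}. f C - 1) \<in> (SIGMA S : Pow CS. S \<rightarrow>\<^sub>E {0..<m})"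
      by auto
  qed
qed

lemma class_weight_shift_coloring:
  assumes "S \<subseteq> CS"
  shows "class_weight CS w (shift_coloring CS S g) 0 = (\<Sum>C\<in>CS - S. w C)"
    and "class_weight CS w (shift_coloring CS S g) (Suc i) = class_weight S w g i"
proof -
  have "{C \<in> CS. shift_coloring CS S g C = 0} = CS - S"
    "{C \<in> CS. shift_coloring CS S g C = Suc i} = {C \<in> S. g C = i}"
    using assms by (auto simp: shift_coloring_def)
  then show "class_weight CS w (shift_coloring CS S g) 0 = (\<Sum>C\<in>CS - S. w C)"
    "class_weight CS w (shift_coloring CS S g) (Suc i) = class_weight S w g i"
    by (simp_all add: class_weight_def)
qed

lemma jacobi_trudi_expand_first_row:
  assumes CS: "finite CS"
  shows "jacobi_trudi (Suc m) a b CS w =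
    (\<Sum>k<Suc m. (-1) ^ k * (\<Sum>S | S \<subseteq> CS \<and> int (\<Sum>C\<in>CS - S. w C) = a 0 - b k.
       jacobi_trudi m (\<lambda>i. a (Suc i)) (\<lambda>j. b (insert_index k j)) S w))"
proof -
  define top where "top k S = (of_bool (int (\<Sum>C\<in>CS - S. w C) = a 0 - b k) :: int)" for k S
  define minor where
    "minor k S g = det (match_matrix m (\<lambda>i. int (class_weight S w g i)) (\<lambda>i. a (Suc i)) (\<lambda>j. b (insert_index k j)))"
    for k S g
  have "jacobi_trudi (Suc m) a b CS w =
      (\<Sum>f \<in> CS \<rightarrow>\<^sub>E {0..<Suc m}. det (match_matrix (Suc m) (\<lambda>i. int (class_weight CS w f i)) a b))"
    by (rule jacobi_trudi_eq_sum_det[OF CS])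
  also have "\<dots> = (\<Sum>(S, g) \<in> (SIGMA S : Pow CS. S \<rightarrow>\<^sub>E {0..<m}).
      det (match_matrix (Suc m) (\<lambda>i. int (class_weight CS w (shift_coloring CS S g) i)) a b))"
    by (subst sum.reindex_bij_betw[OF bij_betw_shift_coloring, symmetric]) (simp add: case_prod_unfold)
  also have "\<dots> = (\<Sum>(S, g) \<in> (SIGMA S : Pow CS. S \<rightarrow>\<^sub>E {0..<m}). \<Sum>k<Suc m. (-1) ^ k * (top k S * minor k S g))"
    by (rule sum.cong) (auto simp: det_match_matrix_Suc class_weight_shift_coloring top_def minor_def ac_simps)
  also have "\<dots> = (\<Sum>S \<in> Pow CS. \<Sum>g \<in> S \<rightarrow>\<^sub>E {0..<m}. \<Sum>k<Suc m. (-1) ^ k * (top k S * minor k S g))"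
    by (rule sum.Sigma[symmetric]) (use CS in \<open>auto intro!: finite_PiE dest: finite_subset\<close>)
  also have "\<dots> = (\<Sum>S \<in> Pow CS. \<Sum>k<Suc m. \<Sum>g \<in> S \<rightarrow>\<^sub>E {0..<m}. (-1) ^ k * (top k S * minor k S g))"
    by (rule sum.cong[OF refl]) (rule sum.swap)
  also have "\<dots> = (\<Sum>k<Suc m. (-1) ^ k * (\<Sum>S \<in> Pow CS. top k S * (\<Sum>g \<in> S \<rightarrow>\<^sub>E {0..<m}. minor k S g)))"
    by (subst sum.swap) (simp add: sum_distrib_left)
  also have "\<dots> = (\<Sum>k<Suc m. (-1) ^ k * (\<Sum>S | S \<subseteq> CS \<and> int (\<Sum>C\<in>CS - S. w C) = a 0 - b k.
       jacobi_trudi m (\<lambda>i. a (Suc i)) (\<lambda>j. b (insert_index k j)) S w))"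
    using CS
    by (simp add: top_def minor_def jacobi_trudi_eq_sum_det[OF finite_subset[OF _ CS]] Int_def Pow_def)
  finally show ?thesis .
qed

lemma weight_add_card_le_sum:
  fixes w :: "'c \<Rightarrow> nat"
  assumes "finite S" "\<forall>D\<in>S. 0 < w D" "C \<in> S"
  shows "w C + (card S - 1) \<le> (\<Sum>D\<in>S. w D)"
proof -
  have "card (S - {C}) \<le> (\<Sum>D\<in>S - {C}. w D)"
    using assms(2) by (metis DiffD1 One_nat_def Suc_le_eq card_eq_sum sum_mono)
  then show ?thesis
    using assms by (simp add: sum.remove)
qed

lemma non_unit_subset_bounds:
  fixes w :: "'c \<Rightarrow> nat"
  assumes fin: "finite S" and pos: "\<forall>C\<in>S. 0 < w C" and total: "(\<Sum>C\<in>S. w C) + k = \<Delta>"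
    and not_unit: "\<not> (k = 0 \<and> (\<forall>C\<in>S. w C = 1) \<and> card S = \<Delta>)"
  shows "card S < \<Delta>" and "\<forall>C\<in>S. w C \<le> \<Delta> - card S + 1"
proof -
  have le_sum: "w C + (card S - 1) \<le> \<Delta>" if "C \<in> S" for C
    using weight_add_card_le_sum[OF fin pos that] total by simp
  show "card S < \<Delta>"
  proof (rule ccontr)
    assume "\<not> card S < \<Delta>"
    moreover have "card S \<le> (\<Sum>C\<in>S. w C)"
      unfolding card_eq_sum using pos by (intro sum_mono) (simp add: Suc_le_eq)
    ultimately have "card S = \<Delta>" "k = 0"
      using total by linarith+
    moreover have "w C = 1" if "C \<in> S" for C
    proof -
      have "0 < card S" "0 < w C"
        using fin that pos card_gt_0_iff by blast+
      then show ?thesis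
        using le_sum[OF that] \<open>card S = \<Delta>\<close> by linarith
    qed
    ultimately show False
      using not_unit by simp
  qed
  then show "\<forall>C\<in>S. w C \<le> \<Delta> - card S + 1"
    using le_sum by fastforce
qed

lemma card_non_unit_subsets_le:
  fixes w :: "'c \<Rightarrow> nat"
  assumes CS: "finite CS" "\<forall>C\<in>CS. 0 < w C"
  shows "card ({(k, S). S \<subseteq> CS \<and> (\<Sum>C\<in>S. w C) + k = \<Delta>} -
      {(0, S) | S. S \<subseteq> {C \<in> CS. w C = 1} \<and> card S = \<Delta>})
    \<le> (\<Sum>j = 1..\<Delta>. card {C \<in> CS. w C \<le> j + 1} choose (\<Delta> - j))"
proof -
  let ?P = "{(k, S). S \<subseteq> CS \<and> (\<Sum>C\<in>S. w C) + k = \<Delta>} - {(0, S) | S. S \<subseteq> {C \<in> CS. w C = 1} \<and> card S = \<Delta>}"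
  let ?U = "\<Union>j \<in> {1..\<Delta>}. {S. S \<subseteq> {C \<in> CS. w C \<le> j + 1} \<and> card S = \<Delta> - j}"
  have inj: "inj_on snd ?P"
    by (rule inj_onI) auto
  have sub: "snd ` ?P \<subseteq> ?U"
  proof
    fix S
    assume "S \<in> snd ` ?P"
    then obtain k where "(k, S) \<in> ?P"
      by force
    then have S: "S \<subseteq> CS" "(\<Sum>C\<in>S. w C) + k = \<Delta>"
      and not_unit: "\<not> (k = 0 \<and> (\<forall>C\<in>S. w C = 1) \<and> card S = \<Delta>)"
      by auto
    have "finite S" "\<forall>C\<in>S. 0 < w C"
      using S(1) CS by (auto dest: finite_subset)
    note bounds = non_unit_subset_bounds[OF this S(2) not_unit]
    have "\<Delta> - card S \<in> {1..\<Delta>}" "card S = \<Delta> - (\<Delta> - card S)"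
      using bounds(1) by auto
    moreover have "S \<subseteq> {C \<in> CS. w C \<le> (\<Delta> - card S) + 1}"
      using bounds(2) S(1) by blast
    ultimately show "S \<in> ?U"
      by blast
  qed
  have "finite ?U"
    by (rule finite_subset[of _ "Pow CS"]) (use CS(1) in auto)
  then have "card ?P \<le> card ?U"
    using card_mono[OF _ sub] card_image[OF inj] by simp
  also have "\<dots> \<le> (\<Sum>j = 1..\<Delta>. card {S. S \<subseteq> {C \<in> CS. w C \<le> j + 1} \<and> card S = \<Delta> - j})"
    by (rule card_UN_le) simp
  also have "\<dots> = (\<Sum>j = 1..\<Delta>. card {C \<in> CS. w C \<le> j + 1} choose (\<Delta> - j))"
    using CS(1) by (simp add: n_subsets)
  finally show ?thesis .
qed

lemma image_neg_insert_index:
  assumes "k \<le> m"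
  shows "(\<lambda>j. - int (insert_index k j)) ` {0..<m} = {- int m..0} - {- int k}"
proof
  show "(\<lambda>j. - int (insert_index k j)) ` {0..<m} \<subseteq> {- int m..0} - {- int k}"
    using assms by (auto simp: insert_index_def split: if_splits)
  show "{- int m..0} - {- int k} \<subseteq> (\<lambda>j. - int (insert_index k j)) ` {0..<m}"
  proof
    fix x
    assume x: "x \<in> {- int m..0} - {- int k}"
    define t where "t = nat (- x)"
    have t: "x = - int t" "t \<le> m" "t \<noteq> k"
      using x by (auto simp: t_def)
    show "x \<in> (\<lambda>j. - int (insert_index k j)) ` {0..<m}"
    proof (cases "t < k")
      case True
      then show ?thesis
        using t assms by (intro image_eqI[of _ _ t]) auto
    next
      case False
      then show ?thesis
        using t by (intro image_eqI[of _ _ "t - 1"]) auto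
    qed
  qed
qed

text \<open>The column set of the k-th first-row minor is {-m..0} - {-k}; sliding the bead at 0 to the gap
  at -k gives the column set of the minor for k = 0.\<close>
lemma bead_reachable_insert_index:
  assumes "k \<le> m"
  shows "bead_reachable ((\<lambda>j. - int (insert_index k j)) ` {0..<m}) ((\<lambda>j. - int (Suc j)) ` {0..<m}) k"
proof (cases "k = 0")
  case True
  then show ?thesis
    by (simp add: bead_reachable_0)
next
  case False
  have "(\<lambda>j. - int (Suc j)) ` {0..<m} = insert (0 - int k) (({- int m..0} - {- int k}) - {0})"
    using image_neg_insert_index[of 0 m] assms False by auto
  then show ?thesis
    using bead_reachable_slide[of 0 "{- int m..0} - {- int k}" k] image_neg_insert_index[OF assms] False
    by simp
qed

lemma jacobi_trudi_first_row_terms: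
  fixes w :: "'c \<Rightarrow> nat" and a :: "nat \<Rightarrow> int"
  assumes CS: "finite CS" and total: "int (\<Sum>C\<in>CS. w C) = a 0 + int \<Delta>"
  shows "jacobi_trudi (Suc m) a (\<lambda>j. - int j) CS w =
    (\<Sum>(k, S) \<in> {(k, S). k < Suc m \<and> S \<subseteq> CS \<and> (\<Sum>C\<in>S. w C) + k = \<Delta>}.
      (-1) ^ k * jacobi_trudi m (\<lambda>i. a (Suc i)) (\<lambda>j. - int (insert_index k j)) S w)"
proof -
  have cond: "int (\<Sum>C\<in>CS - S. w C) = a 0 - - int k \<longleftrightarrow> (\<Sum>C\<in>S. w C) + k = \<Delta>"
    if "S \<subseteq> CS" for S k
    using total sum.subset_diff[OF that CS, of w] by linarith
  have "jacobi_trudi (Suc m) a (\<lambda>j. - int j) CS w =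
      (\<Sum>k<Suc m. \<Sum>S | S \<subseteq> CS \<and> (\<Sum>C\<in>S. w C) + k = \<Delta>.
        (-1) ^ k * jacobi_trudi m (\<lambda>i. a (Suc i)) (\<lambda>j. - int (insert_index k j)) S w)"
    unfolding jacobi_trudi_expand_first_row[OF CS] sum_distrib_left
    using cond by (intro sum.cong refl) auto
  also have "\<dots> = (\<Sum>(k, S) \<in> {(k, S). k < Suc m \<and> S \<subseteq> CS \<and> (\<Sum>C\<in>S. w C) + k = \<Delta>}.
      (-1) ^ k * jacobi_trudi m (\<lambda>i. a (Suc i)) (\<lambda>j. - int (insert_index k j)) S w)"
    by (subst sum.Sigma) (use CS in \<open>auto intro: arg_cong[where f = "sum _"]\<close>)
  finally show ?thesis .
qed

lemma jacobi_trudi_minor_abs_le: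
  fixes a :: "nat \<Rightarrow> int"
  assumes S: "finite S" "\<forall>C\<in>S. 0 < w C" and a: "strict_antimono_on {0..<m} a" and "k \<le> m"
  shows "\<bar>jacobi_trudi m a (\<lambda>j. - int (insert_index k j)) S w\<bar>
    \<le> int (bead_paths (a ` {0..<m}) ((\<lambda>j. - int (Suc j)) ` {0..<m}) ((\<Sum>C\<in>S. w C) + k))"
proof -
  have inj_a: "inj_on a {0..<m}"
    using a by (simp add: strict_antimono_iff_antimono)
  have inj_b: "inj_on (\<lambda>j. - int (insert_index k j)) {0..<m}"
    by (auto simp: inj_on_def insert_index_def split: if_splits)
  have "\<bar>jacobi_trudi m a (\<lambda>j. - int (insert_index k j)) S w\<bar>
      \<le> int (bead_paths (a ` {0..<m}) ((\<lambda>j. - int (insert_index k j)) ` {0..<m}) (\<Sum>C\<in>S. w C))"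
    by (rule jacobi_trudi_abs_le_bead_paths[OF S inj_a inj_b])
  also have "\<dots> \<le> int (bead_paths (a ` {0..<m}) ((\<lambda>j. - int (Suc j)) ` {0..<m}) ((\<Sum>C\<in>S. w C) + k))"
    using bead_paths_mono_target[OF _ bead_reachable_insert_index[OF \<open>k \<le> m\<close>]] by simp
  finally show ?thesis .
qed

lemma jacobi_trudi_first_row_estimate:
  fixes w :: "'c \<Rightarrow> nat" and a :: "nat \<Rightarrow> int"
  assumes CS: "finite CS" "\<forall>C\<in>CS. 0 < w C" and total: "int (\<Sum>C\<in>CS. w C) = a 0 + int \<Delta>"
    and a: "strict_antimono_on {0..<m} (\<lambda>i. a (Suc i))"
  defines "f \<equiv> int (bead_paths ((\<lambda>i. a (Suc i)) ` {0..<m}) ((\<lambda>j. - int (Suc j)) ` {0..<m}) \<Delta>)"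
  shows "\<bar>jacobi_trudi (Suc m) a (\<lambda>j. - int j) CS w - f * int (card {C \<in> CS. w C = 1} choose \<Delta>)\<bar>
    \<le> f * int (\<Sum>j = 1..\<Delta>. card {C \<in> CS. w C \<le> j + 1} choose (\<Delta> - j))"
proof -
  define minor where "minor k S = jacobi_trudi m (\<lambda>i. a (Suc i)) (\<lambda>j. - int (insert_index k j)) S w"
    for k S
  define P where "P = {(k, S). k < Suc m \<and> S \<subseteq> CS \<and> (\<Sum>C\<in>S. w C) + k = \<Delta>}"
  define L where "L = {(0::nat, S) | S. S \<subseteq> {C \<in> CS. w C = 1} \<and> card S = \<Delta>}"
  have finP: "finite P"
    by (rule finite_subset[of _ "{..\<Delta>} \<times> Pow CS"]) (use CS(1) in \<open>auto simp: P_def\<close>)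
  have minor_le: "\<bar>minor k S\<bar> \<le> f" if "(k, S) \<in> P" for k S
    using that CS a jacobi_trudi_minor_abs_le[of S w m "\<lambda>i. a (Suc i)" k]
    by (auto simp: P_def minor_def f_def dest: finite_subset)
  have minor_L: "minor 0 S = f" if "(0, S) \<in> L" for S
  proof -
    have "S \<subseteq> CS" "\<forall>C\<in>S. w C = 1" "card S = \<Delta>"
      using that by (auto simp: L_def)
    moreover have "strict_antimono_on {0..<m} (\<lambda>j. - int (Suc j))"
      by (auto intro: monotone_onI)
    ultimately show ?thesis
      unfolding minor_def f_def using a CS(1)
      by (subst jacobi_trudi_unit_weights) (auto dest: finite_subset)
  qed
  have "L \<subseteq> P"
  proof
    fix p
    assume "p \<in> L"
    then obtain S where S: "p = (0, S)" "S \<subseteq> {C \<in> CS. w C = 1}" "card S = \<Delta>"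
      by (auto simp: L_def)
    then have "(\<Sum>C\<in>S. w C) = card S"
      unfolding card_eq_sum by (intro sum.cong) auto
    with S show "p \<in> P"
      by (auto simp: P_def)
  qed
  have card_L: "card L = card {C \<in> CS. w C = 1} choose \<Delta>"
  proof -
    have "L = Pair 0 ` {S. S \<subseteq> {C \<in> CS. w C = 1} \<and> card S = \<Delta>}"
      by (auto simp: L_def)
    then show ?thesis
      using CS(1) by (simp add: card_image inj_on_def n_subsets)
  qed
  have "card (P - L) \<le> card ({(k, S). S \<subseteq> CS \<and> (\<Sum>C\<in>S. w C) + k = \<Delta>} - L)"
  proof (rule card_mono)
    show "finite ({(k, S). S \<subseteq> CS \<and> (\<Sum>C\<in>S. w C) + k = \<Delta>} - L)"
      by (rule finite_subset[of _ "{..\<Delta>} \<times> Pow CS"]) (use CS(1) in auto)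
  qed (auto simp: P_def)
  also have "\<dots> \<le> (\<Sum>j = 1..\<Delta>. card {C \<in> CS. w C \<le> j + 1} choose (\<Delta> - j))"
    unfolding L_def by (rule card_non_unit_subsets_le[OF CS(1,2)])
  finally have card_rest: "card (P - L) \<le> \<dots>" .
  have "(\<Sum>(k, S)\<in>L. (-1) ^ k * minor k S) = (\<Sum>p\<in>L. f)"
  proof (rule sum.cong[OF refl])
    fix p
    assume "p \<in> L"
    moreover from this obtain S where "p = (0, S)"
      by (auto simp: L_def)
    ultimately show "(case p of (k, S) \<Rightarrow> (-1) ^ k * minor k S) = f"
      using minor_L by simp
  qed
  then have "jacobi_trudi (Suc m) a (\<lambda>j. - int j) CS w - f * int (card {C \<in> CS. w C = 1} choose \<Delta>)
      = (\<Sum>(k, S)\<in>P - L. (-1) ^ k * minor k S)"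
    unfolding jacobi_trudi_first_row_terms[where a = a, OF CS(1) total] minor_def[symmetric] P_def[symmetric]
      sum.subset_diff[OF \<open>L \<subseteq> P\<close> finP] card_L[symmetric]
    by simp
  also have "\<bar>\<dots>\<bar> \<le> (\<Sum>p\<in>P - L. f)"
  proof (rule order_trans[OF sum_abs], rule sum_mono)
    fix p
    assume "p \<in> P - L"
    then show "\<bar>case p of (k, S) \<Rightarrow> (-1) ^ k * minor k S\<bar> \<le> f"
      using minor_le by (cases p) (simp add: abs_mult)
  qed
  also have "\<dots> = f * int (card (P - L))"
    by simp
  also have "\<dots> \<le> f * int (\<Sum>j = 1..\<Delta>. card {C \<in> CS. w C \<le> j + 1} choose (\<Delta> - j))"
    using card_rest by (intro mult_left_mono) (simp_all only: of_nat_le_iff f_def of_nat_0_le_iff)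
  finally show ?thesis .
qed

section \<open>Cycles of a permutation\<close>

lemma perm_orbit_eq_orbit:
  "permutation p \<Longrightarrow> perm_orbit p x = orbit p x"
  unfolding perm_orbit_def by (simp add: orbit_altdef_permutation)

lemma cyc_len_eq_card_orbit:
  assumes "permutation p"
  shows "cyc_len p x = card (orbit p x)"
proof -
  have x: "x \<in> orbit p x"
    using assms by (rule permutation_self_in_orbit)
  have "cyc_len p x = funpow_dist1 p x x"
    unfolding cyc_len_def
  proof (rule Least_equality)
    show "0 < funpow_dist1 p x x \<and> (p ^^ funpow_dist1 p x x) x = x"
      using funpow_dist1_prop[OF x] by simp
    show "funpow_dist1 p x x \<le> k" if "0 < k \<and> (p ^^ k) x = x" for k
      using funpow_dist1_least[of k p x x] that by (meson not_le)
  qed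
  also have "\<dots> = card (orbit p x)"
    unfolding orbit_conv_funpow_dist1[OF x] by (simp add: card_image inj_on_funpow_dist1[OF x])
  finally show ?thesis .
qed

lemma perm_cycles_partition:
  assumes p: "p permutes {0..<n}"
  shows "finite (perm_cycles n p)"
    and "C \<in> perm_cycles n p \<Longrightarrow> finite C \<and> 0 < card C"
    and "(\<Sum>C\<in>perm_cycles n p. card C) = n"
    and "0 < i \<Longrightarrow> cycle_count n p i = card {C \<in> perm_cycles n p. card C = i}"
proof -
  have perm: "permutation p"
    using p by (auto simp: permutation_permutes)
  have orbit_sub: "orbit p x \<subseteq> {0..<n}" if "x < n" for x
    using permutes_orbit_subset[OF p] that by simp
  have orbit_eq: "orbit p y = orbit p x" if "y \<in> orbit p x" for x y
    using orbit_cyclic_eq3[OF cyclic_on_orbit'[OF perm] that] .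
  have cycles: "perm_cycles n p = orbit p ` {0..<n}"
    unfolding perm_cycles_def using perm_orbit_eq_orbit[OF perm] by simp
  have self: "x \<in> orbit p x" for x
    using perm by (rule permutation_self_in_orbit)
  show "finite (perm_cycles n p)"
    unfolding cycles by simp
  show C: "finite C \<and> 0 < card C" if cycle: "C \<in> perm_cycles n p" for C
  proof -
    obtain x where "x < n" "C = orbit p x"
      using cycle unfolding cycles by auto
    then show ?thesis
      using orbit_sub[of x] self[of x] by (auto simp: card_gt_0_iff intro: finite_subset)
  qed
  have disj: "pairwise disjnt (perm_cycles n p)"
    unfolding cycles pairwise_def disjnt_def using orbit_eq by blast
  have "\<Union>(perm_cycles n p) = {0..<n}"
    unfolding cycles using orbit_sub self by fastforce
  then show "(\<Sum>C\<in>perm_cycles n p. card C) = n"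
    using card_Union_disjoint[OF disj] C by simp
  assume "0 < i"
  have points: "{x \<in> {0..<n}. cyc_len p x = i} = \<Union>{C \<in> perm_cycles n p. card C = i}"
    unfolding cycles cyc_len_eq_card_orbit[OF perm] using orbit_sub self orbit_eq by fastforce
  have "card {x \<in> {0..<n}. cyc_len p x = i} = (\<Sum>C\<in>{C \<in> perm_cycles n p. card C = i}. card C)"
    unfolding points using C by (intro card_Union_disjoint pairwise_subset[OF disj]) auto
  then show "cycle_count n p i = card {C \<in> perm_cycles n p. card C = i}"
    unfolding cycle_count_def using \<open>0 < i\<close> by simp
qed

lemma card_short_cycles:
  assumes "p permutes {0..<n}"
  shows "card {C \<in> perm_cycles n p. card C \<le> j + 1} = (\<Sum>i = 1..j + 1. cycle_count n p i)"
proof -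
  have "card {C \<in> perm_cycles n p. card C \<le> j + 1} =
      card (\<Union>i \<in> {1..j + 1}. {C \<in> perm_cycles n p. card C = i})"
    using perm_cycles_partition(2)[OF assms] by (auto simp: Suc_le_eq intro: arg_cong[where f = card])
  also have "\<dots> = (\<Sum>i = 1..j + 1. card {C \<in> perm_cycles n p. card C = i})"
    using perm_cycles_partition(1)[OF assms] by (intro card_UN_disjoint) auto
  finally show ?thesis
    using perm_cycles_partition(4)[OF assms] by simp
qed

lemma perm_cycles_id: "perm_cycles n id = (\<lambda>x. {x}) ` {0..<n}"
  unfolding perm_cycles_def perm_orbit_def by (simp add: id_funpow)

section \<open>Characters\<close>

lemma chi_eq_jacobi_trudi:
  "chi lam p = jacobi_trudi (length lam) (\<lambda>i. int (lam ! i) - int i) (\<lambda>j. - int j)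
     (perm_cycles (sum_list lam) p) card"
  unfolding chi_def jacobi_trudi_def colorings_count_def weighted_colorings_def class_weight_def
  by simp

lemma chi_estimate:
  assumes lam: "is_partition lam n" "lam \<noteq> []" and mu: "is_partition (tl lam) \<Delta>"
    and p: "p permutes {0..<n}"
  shows "\<bar>chi lam p - chi (tl lam) id * int (cycle_count n p 1 choose \<Delta>)\<bar>
    \<le> chi (tl lam) id * int (\<Sum>j = 1..\<Delta>. (\<Sum>i = 1..j + 1. cycle_count n p i) choose (\<Delta> - j))"
proof -
  define m where "m = length (tl lam)"
  define a where "a i = int (lam ! i) - int i" for i
  have len: "length lam = Suc m"
    using lam(2) by (simp add: m_def)
  have a_Suc: "a (Suc i) = int (tl lam ! i) - int i - 1" for i
    using lam(2) by (cases lam) (simp_all add: a_def)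
  have sums: "sum_list lam = n" "sum_list (tl lam) = \<Delta>" "int n = a 0 + int \<Delta>"
    using lam mu by (cases lam; simp add: is_partition_def a_def)+
  have mono: "strict_antimono_on {0..<m} (\<lambda>i. a (Suc i))"
  proof (rule monotone_onI)
    fix i j
    assume "i \<in> {0..<m}" "j \<in> {0..<m}" "i < j"
    then have "tl lam ! j \<le> tl lam ! i"
      using mu sorted_wrt_nth_less[of "(\<ge>)" "tl lam" i j] by (simp add: is_partition_def m_def)
    then show "a (Suc j) < a (Suc i)"
      using \<open>i < j\<close> by (simp add: a_Suc)
  qed
  have "chi (tl lam) id = jacobi_trudi m (\<lambda>i. a (Suc i)) (\<lambda>j. - int (Suc j)) (perm_cycles \<Delta> id) card"
    unfolding chi_eq_jacobi_trudi sums(2) m_def[symmetric]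
    by (rule jacobi_trudi_cong_diff) (simp add: a_Suc)
  also have "\<dots> = int (bead_paths ((\<lambda>i. a (Suc i)) ` {0..<m}) ((\<lambda>j. - int (Suc j)) ` {0..<m}) \<Delta>)"
    using mono by (subst jacobi_trudi_unit_weights) (auto simp: perm_cycles_id card_image intro: monotone_onI)
  finally have chi_mu: "chi (tl lam) id = \<dots>" .
  have counts: "card {C \<in> perm_cycles n p. card C = 1} = cycle_count n p 1"
    "(\<Sum>j = 1..\<Delta>. card {C \<in> perm_cycles n p. card C \<le> j + 1} choose (\<Delta> - j)) =
      (\<Sum>j = 1..\<Delta>. (\<Sum>i = 1..j + 1. cycle_count n p i) choose (\<Delta> - j))"
    using perm_cycles_partition(4)[OF p, of 1] by (simp_all only: card_short_cycles[OF p])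
  have "\<bar>jacobi_trudi (Suc m) a (\<lambda>j. - int j) (perm_cycles n p) card -
      chi (tl lam) id * int (card {C \<in> perm_cycles n p. card C = 1} choose \<Delta>)\<bar>
    \<le> chi (tl lam) id * int (\<Sum>j = 1..\<Delta>. card {C \<in> perm_cycles n p. card C \<le> j + 1} choose (\<Delta> - j))"
    unfolding chi_mu using perm_cycles_partition[OF p] sums(3) mono
    by (intro jacobi_trudi_first_row_estimate) auto
  then show ?thesis
    unfolding counts chi_eq_jacobi_trudi[of lam p] len sums(1) a_def .
qed

lemma mult_q_eq_average:
  assumes "is_partition lam n"
  shows "mult_q lam q = (\<Sum>\<sigma>\<in>sym_grp n. real_of_int (chi lam (\<sigma> ^^ q))) / fact n"
proof -
  have fin: "finite (sym_grp n)"
    by (simp add: sym_grp_def finite_permutations)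
  have "(\<Sum>\<pi>\<in>sym_grp n. real (r_q n q \<pi>) * real_of_int (chi lam \<pi>)) =
      (\<Sum>\<pi>\<in>sym_grp n. \<Sum>\<sigma> | \<sigma> \<in> sym_grp n \<and> \<sigma> ^^ q = \<pi>. real_of_int (chi lam (\<sigma> ^^ q)))"
    unfolding r_q_def by (intro sum.cong) auto
  also have "\<dots> = (\<Sum>\<sigma>\<in>sym_grp n. real_of_int (chi lam (\<sigma> ^^ q)))"
    using fin by (intro sum.group) (auto simp: sym_grp_def permutes_funpow)
  finally show ?thesis
    using assms by (simp add: mult_q_def is_partition_def)
qed

theorem proposition2p3:
  shows "\<exists>C > (0::real). \<forall>(n::nat) (lam::nat list) (mu::nat list) (Delta::nat) (q::nat).
     is_partition lam n \<and> lam \<noteq> [] \<and> mu = tl lam \<and> is_partition mu Delta \<and> 0 < q \<longrightarrow>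
     \<bar>mult_q lam q
        - real_of_int (chi mu id) / fact n *
            (\<Sum>\<pi>\<in>sym_grp n. real (cycle_count n (\<pi> ^^ q) 1 choose Delta))\<bar>
     \<le> C * (real_of_int (chi mu id) / fact n) *
         (\<Sum>j = 1..Delta. \<Sum>\<pi>\<in>sym_grp n.
             real ((\<Sum>i = 1..j+1. cycle_count n (\<pi> ^^ q) i) choose (Delta - j)))"
proof (intro exI[of _ 1] conjI allI impI)
  fix n Delta q :: nat and lam mu :: "nat list"
  assume "is_partition lam n \<and> lam \<noteq> [] \<and> mu = tl lam \<and> is_partition mu Delta \<and> 0 < q"
  then have lam: "is_partition lam n" "lam \<noteq> []" and mu: "mu = tl lam" "is_partition (tl lam) Delta"
    by auto
  define f where "f = real_of_int (chi mu id)"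
  define c where "c \<pi> = real (cycle_count n (\<pi> ^^ q) 1 choose Delta)" for \<pi>
  define R where "R \<pi> = (\<Sum>j = 1..Delta. real ((\<Sum>i = 1..j+1. cycle_count n (\<pi> ^^ q) i) choose (Delta - j)))"
    for \<pi>
  have "\<bar>real_of_int (chi lam (\<pi> ^^ q)) - f * c \<pi>\<bar> \<le> f * R \<pi>" if "\<pi> \<in> sym_grp n" for \<pi>
    using chi_estimate[OF lam mu(2), of "\<pi> ^^ q"] that
    unfolding f_def c_def R_def mu(1) sym_grp_def of_int_le_iff[symmetric, where 'a = real]
    by (simp add: permutes_funpow)
  then have "\<bar>(\<Sum>\<pi>\<in>sym_grp n. real_of_int (chi lam (\<pi> ^^ q))) - f * (\<Sum>\<pi>\<in>sym_grp n. c \<pi>)\<bar>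
      \<le> f * (\<Sum>\<pi>\<in>sym_grp n. R \<pi>)"
    unfolding sum_distrib_left sum_subtractf[symmetric] by (intro order_trans[OF sum_abs] sum_mono)
  then have "\<bar>mult_q lam q - f / fact n * (\<Sum>\<pi>\<in>sym_grp n. c \<pi>)\<bar> \<le> f * (\<Sum>\<pi>\<in>sym_grp n. R \<pi>) / fact n"
    unfolding mult_q_eq_average[OF lam(1)]
    by (simp add: diff_divide_distrib[symmetric] abs_divide divide_right_mono)
  then show "\<bar>mult_q lam q - f / fact n * (\<Sum>\<pi>\<in>sym_grp n. c \<pi>)\<bar>
      \<le> 1 * (f / fact n) * (\<Sum>j = 1..Delta. \<Sum>\<pi>\<in>sym_grp n.
             real ((\<Sum>i = 1..j+1. cycle_count n (\<pi> ^^ q) i) choose (Delta - j)))"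
    unfolding R_def by (simp add: sum.swap[of _ "sym_grp n"])
qed simp

end
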